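(* Let $\Gamma$ be a graph, $c$ a vertex of $\Gamma$, and $w>0$ an integer. Suppose that for every integer $r\ge0$: (1) for every $z\in S_r(c)$ and every $x,y\in S_{r+1}(c)$ with $d(x,z)\le1$, $d(y,z)\le 1$, there is a path $x=x_0,x_1,\dots,x_\ell=y$ with $x_i\in S_{r+1}\cup\dots\cup S_{r+w}$ for all $0\le i\le \ell$; (2) for every adjacent pair $x,y\in S_r(c)$ there is a path $x=x_0,x_1,\dots,x_\ell=y$ with $x_i\in S_{r+1}\cup\dots\cup S_{r+w}$ for all $0<i<\ell$. Then for every $r\ge 0$ the union $S_r\cup\dots\cup S_{r+w-1}$ is connected.
   Context: For a graph $\Gamma$ with graph metric $d$ and a fixed vertex $c$, $S_r=S_r(c)$ is the set of vertices at distance exactly $r$ from $c$. A path is a sequence of vertices each adjacent to the next (no bound on the length $\ell$ is assumed). A set of vertices is connected if its induced subgraph is connected. *)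

theory Defs
  imports Main "HOL-Library.Extended_Nat"
begin

definition graph :: "'a set \<Rightarrow> ('a \<Rightarrow> 'a \<Rightarrow> bool) \<Rightarrow> bool" where
  "graph V E \<longleftrightarrow> (\<forall>x y. E x y \<longrightarrow> x \<in> V \<and> y \<in> V \<and> E y x \<and> x \<noteq> y)"

definition is_path :: "('a \<Rightarrow> 'a \<Rightarrow> bool) \<Rightarrow> 'a list \<Rightarrow> bool" where
  "is_path E xs \<longleftrightarrow> xs \<noteq> [] \<and> (\<forall>i. Suc i < length xs \<longrightarrow> E (xs ! i) (xs ! Suc i))"

text \<open>Graph metric (infinite if no path exists): length of a shortest path.\<close>

definition gdist :: "'a set \<Rightarrow> ('a \<Rightarrow> 'a \<Rightarrow> bool) \<Rightarrow> 'a \<Rightarrow> 'a \<Rightarrow> enat" where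
  "gdist V E u v = (INF xs \<in> {xs. is_path E xs \<and> set xs \<subseteq> V \<and> hd xs = u \<and> last xs = v}.
                      enat (length xs - 1))"

definition sphere :: "'a set \<Rightarrow> ('a \<Rightarrow> 'a \<Rightarrow> bool) \<Rightarrow> 'a \<Rightarrow> nat \<Rightarrow> 'a set" where
  "sphere V E c r = {v \<in> V. gdist V E c v = enat r}"

definition connected_set :: "('a \<Rightarrow> 'a \<Rightarrow> bool) \<Rightarrow> 'a set \<Rightarrow> bool" where
  "connected_set E A \<longleftrightarrow>
     (\<forall>x\<in>A. \<forall>y\<in>A. \<exists>xs. is_path E xs \<and> hd xs = x \<and> last xs = y \<and> set xs \<subseteq> A)"

end

theory Submission
  imports Defs
begin

text \<open>Write \<open>U r\<close> for \<open>S r \<union> \<dots> \<union> S (r + w - 1)\<close> (\<open>band w r\<close> below). Every vertex of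
  \<open>U r\<close> reaches \<open>S r\<close> inside \<open>U r\<close> by following parents, so it suffices that any two
  vertices of \<open>S r\<close> are joined inside \<open>U r\<close>. This is proved by induction on \<open>r\<close>: given
  \<open>a, b \<in> S (r + 1)\<close>, join their parents by a path in \<open>U r\<close> and push it one sphere
  outwards, replacing each vertex of \<open>S r\<close> on it by one of its children. Children of a
  common vertex are joined inside \<open>U (r + 1)\<close> by condition (1), and an edge inside \<open>S r\<close>
  is bypassed through \<open>U (r + 1)\<close> by condition (2).\<close>

lemma gdist_le_path_length:
  assumes "is_path E xs" "set xs \<subseteq> V" "hd xs = u" "last xs = v"
  shows "gdist V E u v \<le> enat (length xs - 1)"
  unfolding gdist_def using assms by (intro INF_lower) auto

lemma gdist_enatE:
  assumes "gdist V E u v = enat k"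
  obtains xs where "is_path E xs" "set xs \<subseteq> V" "hd xs = u" "last xs = v" "length xs = Suc k"
proof -
  let ?P = "{xs. is_path E xs \<and> set xs \<subseteq> V \<and> hd xs = u \<and> last xs = v}"
  let ?f = "\<lambda>xs. enat (length xs - 1)"
  have "?P \<noteq> {}"
  proof
    assume "?P = {}"
    then have "gdist V E u v = \<infinity>"
      unfolding gdist_def by (simp only: image_empty Inf_empty) (simp add: top_enat_def)
    with assms show False by simp
  qed
  then have "Inf (?f ` ?P) \<in> ?f ` ?P"
    unfolding Inf_enat_def by (auto intro: LeastI)
  then obtain xs where xs: "xs \<in> ?P" "gdist V E u v = ?f xs"
    unfolding gdist_def by auto
  then have "xs \<noteq> []" by (simp add: is_path_def)
  with xs assms that show ?thesis by auto
qed

lemma is_path_snoc: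
  assumes "is_path E xs" "E (last xs) v"
  shows "is_path E (xs @ [v])"
  using assms unfolding is_path_def
  by (auto simp: nth_append last_conv_nth less_Suc_eq) (metis diff_Suc_Suc diff_zero)

lemma is_path_take: "is_path E xs \<Longrightarrow> n > 0 \<Longrightarrow> is_path E (take n xs)"
  unfolding is_path_def by auto

definition induced :: "('a \<Rightarrow> 'a \<Rightarrow> bool) \<Rightarrow> 'a set \<Rightarrow> 'a \<Rightarrow> 'a \<Rightarrow> bool" where
  "induced E A u v \<longleftrightarrow> E u v \<and> u \<in> A \<and> v \<in> A"

lemma induced_rtranclp_mono: "A \<subseteq> B \<Longrightarrow> (induced E A)\<^sup>*\<^sup>* x y \<Longrightarrow> (induced E B)\<^sup>*\<^sup>* x y"
  by (erule rtranclp_mono[THEN predicate2D, rotated]) (auto simp: induced_def)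

lemma symp_induced: "graph V E \<Longrightarrow> symp (induced E A)"
  by (auto simp: symp_def induced_def graph_def)

lemma is_path_induced_rtranclp:
  assumes "is_path E xs" "j < length xs" "i \<le> j" "\<And>k. i \<le> k \<Longrightarrow> k \<le> j \<Longrightarrow> xs ! k \<in> A"
  shows "(induced E A)\<^sup>*\<^sup>* (xs ! i) (xs ! j)"
  using assms
proof (induction j)
  case (Suc j)
  show ?case
  proof (cases "i = Suc j")
    case False
    then have "(induced E A)\<^sup>*\<^sup>* (xs ! i) (xs ! j)" using Suc by auto
    moreover have "induced E A (xs ! j) (xs ! Suc j)"
      using Suc False by (auto simp: induced_def is_path_def)
    ultimately show ?thesis by auto
  qed simp
qed simp

lemma is_path_induced_rtranclp_hd_last:
  assumes "is_path E xs" "set xs \<subseteq> A"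
  shows "(induced E A)\<^sup>*\<^sup>* (hd xs) (last xs)"
proof -
  have "xs \<noteq> []" using assms(1) by (simp add: is_path_def)
  moreover have "xs ! k \<in> A" if "k \<le> length xs - 1" for k
  proof -
    have "k < length xs" using that \<open>xs \<noteq> []\<close> by (cases xs) auto
    then show ?thesis using assms(2) nth_mem by blast
  qed
  ultimately show ?thesis
    using is_path_induced_rtranclp[OF assms(1), of "length xs - 1" 0 A]
    by (simp add: hd_conv_nth last_conv_nth)
qed

lemma induced_rtranclp_imp_path:
  "(induced E A)\<^sup>*\<^sup>* x y \<Longrightarrow> y \<in> A \<Longrightarrow>
    \<exists>xs. is_path E xs \<and> hd xs = x \<and> last xs = y \<and> set xs \<subseteq> A"
proof (induction rule: converse_rtranclp_induct)
  case base
  then show ?case by (intro exI[of _ "[y]"]) (auto simp: is_path_def)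
next
  case (step x x')
  then obtain xs where xs: "is_path E xs" "hd xs = x'" "last xs = y" "set xs \<subseteq> A" by auto
  then have "is_path E (x # xs)" using step(1) unfolding is_path_def induced_def
    by (auto simp: nth_Cons hd_conv_nth split: nat.splits)
  then show ?case using xs step(1) by (intro exI[of _ "x # xs"]) (auto simp: induced_def is_path_def)
qed

lemma connected_setI:
  "(\<And>x y. x \<in> A \<Longrightarrow> y \<in> A \<Longrightarrow> (induced E A)\<^sup>*\<^sup>* x y) \<Longrightarrow> connected_set E A"
  unfolding connected_set_def using induced_rtranclp_imp_path by metis

locale rooted_graph =
  fixes V :: "'a set" and E :: "'a \<Rightarrow> 'a \<Rightarrow> bool" and c :: 'a
  assumes graph: "graph V E"
begin

abbreviation S :: "nat \<Rightarrow> 'a set" where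
  "S \<equiv> sphere V E c"

lemma edge_sym: "E u v \<Longrightarrow> E v u"
  using graph by (simp add: graph_def)

lemma gdist_edge: "E x y \<Longrightarrow> gdist V E x y \<le> 1"
  using gdist_le_path_length[of E "[x, y]" V x y] graph
  by (simp add: is_path_def graph_def less_Suc_eq one_enat_def)

lemma gdist_edge_le:
  assumes "E u v"
  shows "gdist V E c v \<le> gdist V E c u + 1"
proof (cases "gdist V E c u")
  case (enat k)
  then obtain xs where xs: "is_path E xs" "set xs \<subseteq> V" "hd xs = c" "last xs = u"
    "length xs = Suc k" by (rule gdist_enatE)
  have "v \<in> V" using graph assms by (auto simp: graph_def)
  have "gdist V E c v \<le> enat (length (xs @ [v]) - 1)"
    by (rule gdist_le_path_length) (use xs assms \<open>v \<in> V\<close> is_path_snoc in \<open>auto simp: hd_append\<close>)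
  then show ?thesis using xs enat by (simp add: one_enat_def)
qed simp

lemma sphere_edge:
  assumes u: "u \<in> S k" and e: "E u v"
  shows "\<exists>j. v \<in> S j \<and> k \<le> Suc j \<and> j \<le> Suc k"
proof -
  have "v \<in> V" using graph e by (auto simp: graph_def)
  have gu: "gdist V E c u = enat k" using u by (simp add: sphere_def)
  have "gdist V E c v \<le> enat (Suc k)"
    using gdist_edge_le[OF e] gu by (simp add: one_enat_def)
  then obtain j where j: "gdist V E c v = enat j" "j \<le> Suc k"
    using enat_ile by fastforce
  moreover have "k \<le> Suc j"
    using gdist_edge_le[OF edge_sym[OF e]] gu j by (simp add: one_enat_def)
  ultimately show ?thesis using \<open>v \<in> V\<close> by (auto simp: sphere_def)
qed

lemma sphere_parent:
  assumes v: "v \<in> S (Suc k)"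
  obtains u where "u \<in> S k" "E u v"
proof -
  have gv: "gdist V E c v = enat (Suc k)" using v by (simp add: sphere_def)
  then obtain xs where xs: "is_path E xs" "set xs \<subseteq> V" "hd xs = c" "last xs = v"
    "length xs = Suc (Suc k)" by (rule gdist_enatE)
  define u where "u = xs ! k"
  have uv: "E u v" using xs unfolding u_def is_path_def by (auto simp: last_conv_nth)
  have "u \<in> V" using xs unfolding u_def by auto
  have "last (take (Suc k) xs) = u" using xs(5) by (simp add: take_Suc_conv_app_nth u_def)
  then have "gdist V E c u \<le> enat k"
    using gdist_le_path_length[of E "take (Suc k) xs" V c u] xs is_path_take[OF xs(1)]
    by (auto dest: in_set_takeD)
  then obtain m where m: "gdist V E c u = enat m" "m \<le> k" using enat_ile by fastforce
  have "enat (Suc k) \<le> enat m + 1" using gdist_edge_le[OF uv] m gv by simp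
  then have "m = k" using m by (simp add: one_enat_def)
  then show ?thesis using that m \<open>u \<in> V\<close> uv by (auto simp: sphere_def)
qed

lemma sphere_0:
  assumes "a \<in> S 0"
  shows "a = c"
proof -
  have "gdist V E c a = enat 0" using assms by (simp add: sphere_def)
  then obtain xs where "hd xs = c" "last xs = a" "length xs = 1" by (auto elim: gdist_enatE)
  then show ?thesis by (cases xs) auto
qed

lemma descend_to_sphere:
  "v \<in> S k \<Longrightarrow> r \<le> k \<Longrightarrow> \<exists>u \<in> S r. (induced E (\<Union>j\<in>{r..k}. S j))\<^sup>*\<^sup>* v u"
proof (induction k arbitrary: v)
  case (Suc k)
  show ?case
  proof (cases "r = Suc k")
    case False
    then have "r \<le> k" using Suc by auto
    obtain p where p: "p \<in> S k" "E p v" using sphere_parent[OF Suc.prems(1)] .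
    have "induced E (\<Union>j\<in>{r..Suc k}. S j) v p"
      using p Suc.prems \<open>r \<le> k\<close> edge_sym unfolding induced_def by fastforce
    moreover obtain u where "u \<in> S r" "(induced E (\<Union>j\<in>{r..k}. S j))\<^sup>*\<^sup>* p u"
      using Suc.IH[OF p(1) \<open>r \<le> k\<close>] by blast
    then have "(induced E (\<Union>j\<in>{r..Suc k}. S j))\<^sup>*\<^sup>* p u"
      by (elim induced_rtranclp_mono[rotated], intro UN_mono) auto
    ultimately show ?thesis using \<open>u \<in> S r\<close> by (meson converse_rtranclp_into_rtranclp)
  qed (use Suc in auto)
qed blast

definition band :: "nat \<Rightarrow> nat \<Rightarrow> 'a set" where
  "band w r = (\<Union>k\<in>{r..<r+w}. S k)"

lemma band_Suc:
  assumes "x \<in> band w r" "x \<notin> S r"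
  shows "x \<in> band w (Suc r)"
proof -
  from assms obtain k where "x \<in> S k" "r < k" "k < r + w" unfolding band_def by (auto simp: le_less)
  then show ?thesis unfolding band_def by (intro UN_I[of k]) auto
qed

lemma band_Suc_neighbour:
  assumes "x \<in> band w (Suc r)" "u \<in> S r" "E u x"
  shows "x \<in> S (Suc r)"
proof -
  obtain k where k: "x \<in> S k" "Suc r \<le> k" using assms(1) by (auto simp: band_def)
  obtain j where "x \<in> S j" "j \<le> Suc r" using sphere_edge[OF assms(2,3)] by blast
  then show ?thesis using k by (auto simp: sphere_def)
qed

text \<open>The vertices standing in for \<open>v\<close> when a path in \<open>band w r\<close> is pushed into
  \<open>band w (Suc r)\<close>: its children if \<open>v \<in> S r\<close>, and \<open>v\<close> itself otherwise.\<close>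

definition lift :: "nat \<Rightarrow> 'a \<Rightarrow> 'a \<Rightarrow> bool" where
  "lift r v d \<longleftrightarrow> (if v \<in> S r then d \<in> S (Suc r) \<and> E v d else d = v)"

end

locale band_conditions = rooted_graph V E c for V :: "'a set" and E c +
  fixes w :: nat
  assumes w_pos: "w > 0"
    and children_joined: "\<And>r z x y. z \<in> sphere V E c r \<Longrightarrow> x \<in> sphere V E c (r + 1) \<Longrightarrow>
                  y \<in> sphere V E c (r + 1) \<Longrightarrow> gdist V E x z \<le> 1 \<Longrightarrow> gdist V E y z \<le> 1 \<Longrightarrow>
                  \<exists>xs. is_path E xs \<and> hd xs = x \<and> last xs = y \<and>
                       (\<forall>i < length xs. xs ! i \<in> (\<Union>k\<in>{r+1..r+w}. sphere V E c k))"
    and sphere_edge_detour: "\<And>r x y. x \<in> sphere V E c r \<Longrightarrow> y \<in> sphere V E c r \<Longrightarrow> E x y \<Longrightarrow>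
                  \<exists>xs. is_path E xs \<and> hd xs = x \<and> last xs = y \<and> 3 \<le> length xs \<and>
                       (\<forall>i. 0 < i \<and> i < length xs - 1 \<longrightarrow>
                             xs ! i \<in> (\<Union>k\<in>{r+1..r+w}. sphere V E c k))"
begin

lemma band_Suc_eq: "(\<Union>k\<in>{Suc r..r+w}. S k) = band w (Suc r)"
  unfolding band_def by (rule arg_cong[where f = Union]) auto

lemma band_eq: "(\<Union>k\<in>{r..r+w-1}. S k) = band w r"
  unfolding band_def using w_pos by (intro arg_cong[where f = Union] image_cong) auto

lemma siblings_linked:
  assumes "z \<in> S r" "x \<in> S (Suc r)" "y \<in> S (Suc r)" "E z x" "E z y"
  shows "(induced E (band w (Suc r)))\<^sup>*\<^sup>* x y"
proof -
  have "gdist V E x z \<le> 1" "gdist V E y z \<le> 1"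
    using assms(4,5) by (auto intro!: gdist_edge edge_sym)
  then obtain xs where "is_path E xs" "hd xs = x" "last xs = y" "set xs \<subseteq> band w (Suc r)"
    using children_joined[of z r x y, unfolded Suc_eq_plus1[symmetric] band_Suc_eq] assms(1-3)
    by (auto simp: set_conv_nth)
  then show ?thesis using is_path_induced_rtranclp_hd_last by metis
qed

lemma sphere_edge_children_linked:
  assumes u: "u \<in> S r" and v: "v \<in> S r" and uv: "E u v"
  obtains p q where "p \<in> S (Suc r)" "E u p" "q \<in> S (Suc r)" "E v q"
    "(induced E (band w (Suc r)))\<^sup>*\<^sup>* p q"
proof -
  obtain xs where xs: "is_path E xs" "hd xs = u" "last xs = v" "3 \<le> length xs"
    and inner: "\<And>i. 0 < i \<Longrightarrow> i < length xs - 1 \<Longrightarrow> xs ! i \<in> band w (Suc r)"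
    using sphere_edge_detour[OF u v uv, unfolded Suc_eq_plus1[symmetric] band_Suc_eq] by auto
  define p where "p = xs ! 1"
  define q where "q = xs ! (length xs - 2)"
  have "E u p"
    using xs unfolding p_def is_path_def by (auto simp: hd_conv_nth)
  moreover have "E q v"
  proof -
    have "Suc (length xs - 2) < length xs" "Suc (length xs - 2) = length xs - 1"
      using xs(4) by auto
    then show ?thesis
      using xs(1,3) unfolding q_def is_path_def by (metis last_conv_nth)
  qed
  moreover have "p \<in> band w (Suc r)" "q \<in> band w (Suc r)"
    using inner xs(4) unfolding p_def q_def by auto
  moreover have "(induced E (band w (Suc r)))\<^sup>*\<^sup>* p q"
    unfolding p_def q_def by (rule is_path_induced_rtranclp) (use xs inner in auto)
  ultimately show ?thesis
    using that band_Suc_neighbour u v edge_sym by blast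
qed

lemma lift_edge:
  assumes u: "u \<in> band w r" and v: "v \<in> band w r" and uv: "E u v" and d: "lift r u d"
  shows "\<exists>d'. lift r v d' \<and> (induced E (band w (Suc r)))\<^sup>*\<^sup>* d d'"
proof (cases "u \<in> S r")
  case uS: True
  then have dS: "d \<in> S (Suc r)" "E u d" using d by (auto simp: lift_def)
  show ?thesis
  proof (cases "v \<in> S r")
    case vS: True
    obtain p q where "p \<in> S (Suc r)" "E u p" "q \<in> S (Suc r)" "E v q"
      "(induced E (band w (Suc r)))\<^sup>*\<^sup>* p q"
      using sphere_edge_children_linked[OF uS vS uv] .
    moreover have "(induced E (band w (Suc r)))\<^sup>*\<^sup>* d p"
      using siblings_linked[OF uS dS(1) \<open>p \<in> S (Suc r)\<close> dS(2) \<open>E u p\<close>] .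
    ultimately show ?thesis using vS by (auto simp: lift_def)
  next
    case vS: False
    have "v \<in> S (Suc r)" using band_Suc_neighbour[OF band_Suc[OF v vS] uS uv] .
    then show ?thesis
      using siblings_linked[OF uS dS(1) _ dS(2) uv] vS by (auto simp: lift_def)
  qed
next
  case uS: False
  then have "d = u" using d by (simp add: lift_def)
  show ?thesis
  proof (cases "v \<in> S r")
    case vS: True
    have "u \<in> S (Suc r)" using band_Suc_neighbour[OF band_Suc[OF u uS] vS edge_sym[OF uv]] .
    then show ?thesis using vS \<open>d = u\<close> edge_sym[OF uv] by (auto simp: lift_def)
  next
    case vS: False
    have "induced E (band w (Suc r)) u v"
      using band_Suc[OF u uS] band_Suc[OF v vS] uv by (simp add: induced_def)
    then show ?thesis using vS \<open>d = u\<close> by (auto simp: lift_def)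
  qed
qed

lemma lift_rtranclp:
  assumes "(induced E (band w r))\<^sup>*\<^sup>* u v" "lift r u d"
  shows "\<exists>d'. lift r v d' \<and> (induced E (band w (Suc r)))\<^sup>*\<^sup>* d d'"
  using assms(1)
proof (induction rule: rtranclp_induct)
  case base
  show ?case using assms(2) by blast
next
  case (step v v')
  then obtain d' where "lift r v d'" "(induced E (band w (Suc r)))\<^sup>*\<^sup>* d d'" by blast
  moreover have "v \<in> band w r" "v' \<in> band w r" "E v v'"
    using step(2) by (auto simp: induced_def)
  then obtain d'' where "lift r v' d''" "(induced E (band w (Suc r)))\<^sup>*\<^sup>* d' d''"
    using lift_edge \<open>lift r v d'\<close> by blast
  ultimately show ?case by (meson rtranclp_trans)
qed

lemma sphere_linked: "a \<in> S r \<Longrightarrow> b \<in> S r \<Longrightarrow> (induced E (band w r))\<^sup>*\<^sup>* a b"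
proof (induction r arbitrary: a b)
  case 0
  then show ?case using sphere_0 by auto
next
  case (Suc r)
  obtain a' where a': "a' \<in> S r" "E a' a" using sphere_parent[OF Suc.prems(1)] .
  obtain b' where b': "b' \<in> S r" "E b' b" using sphere_parent[OF Suc.prems(2)] .
  have "lift r a' a" using a' Suc.prems(1) by (simp add: lift_def)
  then obtain d where "lift r b' d" and ad: "(induced E (band w (Suc r)))\<^sup>*\<^sup>* a d"
    using lift_rtranclp Suc.IH[OF a'(1) b'(1)] by blast
  then have "d \<in> S (Suc r)" "E b' d" using b'(1) by (auto simp: lift_def)
  then have "(induced E (band w (Suc r)))\<^sup>*\<^sup>* d b"
    using siblings_linked[OF b'(1) _ Suc.prems(2) _ b'(2)] by blast
  then show ?case using ad by (meson rtranclp_trans)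
qed

lemma band_linked_to_sphere:
  assumes "x \<in> band w r"
  obtains u where "u \<in> S r" "(induced E (band w r))\<^sup>*\<^sup>* x u"
proof -
  obtain k where k: "x \<in> S k" "r \<le> k" "k < r + w" using assms by (auto simp: band_def)
  then have sub: "(\<Union>j\<in>{r..k}. S j) \<subseteq> band w r" unfolding band_def by (intro UN_mono) auto
  obtain u where "u \<in> S r" "(induced E (\<Union>j\<in>{r..k}. S j))\<^sup>*\<^sup>* x u"
    using descend_to_sphere[OF k(1,2)] by blast
  then show ?thesis using that induced_rtranclp_mono[OF sub] by blast
qed

lemma band_connected: "connected_set E (band w r)"
proof (rule connected_setI)
  fix x y assume x: "x \<in> band w r" and y: "y \<in> band w r"
  obtain a where "a \<in> S r" "(induced E (band w r))\<^sup>*\<^sup>* x a"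
    using band_linked_to_sphere[OF x] .
  moreover obtain b where "b \<in> S r" "(induced E (band w r))\<^sup>*\<^sup>* y b"
    using band_linked_to_sphere[OF y] .
  moreover have "(induced E (band w r))\<^sup>*\<^sup>* b y"
    using symp_rtranclp[OF symp_induced[OF graph]] \<open>(induced E (band w r))\<^sup>*\<^sup>* y b\<close>
    by (simp add: sympD)
  ultimately show "(induced E (band w r))\<^sup>*\<^sup>* x y"
    using sphere_linked by (meson rtranclp_trans)
qed

end

theorem lemma2p1:
  fixes V :: "'a set" and E :: "'a \<Rightarrow> 'a \<Rightarrow> bool" and c :: 'a and w :: nat
  assumes G: "graph V E"
    and c: "c \<in> V"
    and w: "w > 0"
    and cond1: "\<And>r z x y. z \<in> sphere V E c r \<Longrightarrow> x \<in> sphere V E c (r + 1) \<Longrightarrow>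
                  y \<in> sphere V E c (r + 1) \<Longrightarrow> gdist V E x z \<le> 1 \<Longrightarrow> gdist V E y z \<le> 1 \<Longrightarrow>
                  \<exists>xs. is_path E xs \<and> hd xs = x \<and> last xs = y \<and>
                       (\<forall>i < length xs. xs ! i \<in> (\<Union>k\<in>{r+1..r+w}. sphere V E c k))"
    and cond2: "\<And>r x y. x \<in> sphere V E c r \<Longrightarrow> y \<in> sphere V E c r \<Longrightarrow> E x y \<Longrightarrow>
                  \<exists>xs. is_path E xs \<and> hd xs = x \<and> last xs = y \<and> 3 \<le> length xs \<and>
                       (\<forall>i. 0 < i \<and> i < length xs - 1 \<longrightarrow>
                             xs ! i \<in> (\<Union>k\<in>{r+1..r+w}. sphere V E c k))"
  shows "\<forall>r. connected_set E (\<Union>k\<in>{r..r+w-1}. sphere V E c k)"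
proof -
  interpret band_conditions V E c w
    using G w cond1 cond2 by unfold_locales
  show ?thesis using band_connected band_eq by simp
qed

end
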